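(* For every $A\in\mathcal{B}$ we have $\det(A)=(-t)^k$ for some integer $k$. In particular, $\overline{\rho}(\mathcal{B})=\mathrm{PSL}(2,\mathbb{Z})$.
   Context: For a matrix $A$ with Laurent polynomial entries, $\overline{A}$ denotes the matrix obtained by substituting $t\mapsto t^{-1}$ in every entry. Let $J_3=\begin{pmatrix}1&-t^{-1}&-t^{-1}\\-t&1&-t^{-1}\\-t&-t&1\end{pmatrix}$, $v=(t,t^2,t^3)$ (a row vector) and $\vec{1}=(1,1,1)^T$. The formal Burau group is $\mathcal{B}=\{A\in\mathrm{GL}(3,\mathbb{Z}[t,t^{-1}]) : vA=v,\ A\vec 1=\vec 1,\ \overline{A}J_3A^T=J_3\}$. For $A\in\mathcal{B}$, let $B=A|_{t=-1}\in\mathrm{GL}(3,\mathbb{Z})$ and $\rho(B)=\begin{pmatrix}1-B_{13}&1-B_{11}\\1-B_{33}&1-B_{31}\end{pmatrix}\in\mathrm{GL}(2,\mathbb{Z})$; $\overline{\rho}(A)$ is the image of $\rho(B)$ in $\mathrm{PGL}(2,\mathbb{Q}(t))$ (quotient by nonzero scalars), and $\mathrm{PSL}(2,\mathbb{Z})$ is identified with the image of $\mathrm{SL}(2,\mathbb{Z})$ there. *)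

theory Defs
  imports "HOL-Analysis.Analysis"
    "HOL-Computational_Algebra.Formal_Laurent_Series"
    "HOL-Computational_Algebra.Polynomial"
    "HOL-Computational_Algebra.Fraction_Field"
begin

text \<open>Laurent polynomials Z[t,t^-1] are modelled as integer formal Laurent series
  with finitely many nonzero coefficients; t is fls_X.\<close>

definition is_lpoly :: "int fls \<Rightarrow> bool" where
  "is_lpoly f \<longleftrightarrow> finite {n. fls_nth f n \<noteq> 0}"

text \<open>Substitution t to t^-1 (only meaningful on Laurent polynomials).\<close>
definition lbar :: "int fls \<Rightarrow> int fls" where
  "lbar f = (if is_lpoly f then Abs_fls (\<lambda>n. fls_nth f (- n)) else 0)"

definition eval_m1 :: "int fls \<Rightarrow> int" where
  "eval_m1 f = (\<Sum>n\<in>{n. fls_nth f n \<noteq> 0}. fls_nth f n * (-1) ^ nat \<bar>n\<bar>)"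

definition neg_t_pow :: "int \<Rightarrow> int fls" where
  "neg_t_pow k = (-1) ^ nat \<bar>k\<bar> * fls_X_intpow k"

definition is_lmat :: "int fls ^3^3 \<Rightarrow> bool" where
  "is_lmat A \<longleftrightarrow> (\<forall>i j. is_lpoly (A $ i $ j))"

definition GL3_laurent :: "(int fls ^3^3) set" where
  "GL3_laurent = {A. is_lmat A \<and> (\<exists>B. is_lmat B \<and> A ** B = mat 1 \<and> B ** A = mat 1)}"

definition mat_bar :: "int fls ^3^3 \<Rightarrow> int fls ^3^3" where
  "mat_bar A = (\<chi> i j. lbar (A $ i $ j))"

definition t_inv :: "int fls" where
  "t_inv = fls_X_intpow (-1)"

definition J3 :: "int fls ^3^3" where
  "J3 = vector [vector [1, - t_inv, - t_inv],
                vector [- fls_X, 1, - t_inv],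
                vector [- fls_X, - fls_X, 1]]"

definition v_row :: "int fls ^3" where
  "v_row = vector [fls_X, fls_X ^ 2, fls_X ^ 3]"

definition one_col :: "int fls ^3" where
  "one_col = vector [1, 1, 1]"

definition formal_Burau :: "(int fls ^3^3) set" where
  "formal_Burau = {A \<in> GL3_laurent. v_row v* A = v_row \<and> A *v one_col = one_col
                   \<and> mat_bar A ** J3 ** transpose A = J3}"

definition eval_mat_m1 :: "int fls ^3^3 \<Rightarrow> int ^3^3" where
  "eval_mat_m1 A = (\<chi> i j. eval_m1 (A $ i $ j))"

definition rho :: "int ^3^3 \<Rightarrow> int ^2^2" where
  "rho B = vector [vector [1 - B $ 1 $ 3, 1 - B $ 1 $ 1],
                   vector [1 - B $ 3 $ 3, 1 - B $ 3 $ 1]]"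

text \<open>Q(t) = fraction field of Q[t]; PGL(2,Q(t)) classes as sets of matrices modulo nonzero scalars.\<close>
type_synonym Qt = "rat poly fract"

definition int_to_Qt_mat :: "int ^2^2 \<Rightarrow> Qt ^2^2" where
  "int_to_Qt_mat M = (\<chi> i j. of_int (M $ i $ j))"

definition pgl_class :: "Qt ^2^2 \<Rightarrow> (Qt ^2^2) set" where
  "pgl_class X = {(\<chi> i j. c * X $ i $ j) | c. c \<noteq> 0}"

definition rho_bar :: "int fls ^3^3 \<Rightarrow> (Qt ^2^2) set" where
  "rho_bar A = pgl_class (int_to_Qt_mat (rho (eval_mat_m1 A)))"

definition PSL2Z :: "(Qt ^2^2) set set" where
  "PSL2Z = (\<lambda>M. pgl_class (int_to_Qt_mat M)) ` {M :: int ^2^2. det M = 1}"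

end

theory Submission
  imports Defs
begin

(* det A is a unit of Z[t,t^-1], hence of the form c t^k with c = 1 or -1, and
   the sign is found by evaluating at t = -1.  There the unitarity relation degenerates
   (J3 becomes the all-ones matrix), but its entries above the diagonal, once the factor 1 + t
   is cancelled, still say that the rows of B = A(-1) are pairwise unimodular for a skew form;
   together with vB = v at t = -1 this forces det B = 1, so c = (-1)^k.  The same relations and
   the row sums of B give det rho(B) = 1.  Conversely, the Burau matrices of the braid
   generators lie in the group and act through rho by elementary column operations, which
   generate SL(2,Z) up to the sign -1 that PSL(2,Z) ignores. *)

no_notation fps_nth (infixl \<open>$\<close> 75)

section \<open>Laurent polynomials\<close>

definition lsupp :: "int fls \<Rightarrow> int set" where
  "lsupp f = {n. fls_nth f n \<noteq> 0}"

definition lmonom :: "int \<Rightarrow> int \<Rightarrow> int fls" where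
  "lmonom c n = fls_shift (- n) (fls_const c)"

lemma is_lpoly_iff_finite_lsupp: "is_lpoly f \<longleftrightarrow> finite (lsupp f)"
  by (simp add: is_lpoly_def lsupp_def)

lemma fls_nth_lmonom [simp]: "fls_nth (lmonom c n) m = (if m = n then c else 0)"
  by (simp add: lmonom_def)

lemma lsupp_lmonom: "lsupp (lmonom c n) \<subseteq> {n}"
  by (auto simp: lsupp_def)

lemma lmonom_0_right: "lmonom c 0 = fls_const c"
  by (simp add: lmonom_def)

lemma lmonom_1_left: "lmonom 1 n = fls_X_intpow n"
  by (simp add: lmonom_def)

lemma of_int_fls_eq_lmonom: "(of_int c :: int fls) = lmonom c 0"
  by (simp add: lmonom_0_right fls_of_int)

lemma lmonom_mult: "lmonom a i * lmonom b j = lmonom (a * b) (i + j)"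
  by (simp add: lmonom_def fls_times_both_shifted_simp)

lemma lpoly_eq_sum_lmonom:
  assumes "finite S" "lsupp f \<subseteq> S"
  shows "f = (\<Sum>n\<in>S. lmonom (fls_nth f n) n)"
proof (rule fls_eqI)
  fix m
  have "fls_nth (\<Sum>n\<in>S. lmonom (fls_nth f n) n) m = (\<Sum>n\<in>S. if m = n then fls_nth f n else 0)"
    by (simp add: fls_nth_sum)
  also have "\<dots> = fls_nth f m"
    using assms by (auto simp: sum.delta lsupp_def)
  finally show "fls_nth f m = fls_nth (\<Sum>n\<in>S. lmonom (fls_nth f n) n) m" by simp
qed

lemma is_lpoly_lmonom [simp]: "is_lpoly (lmonom c n)"
  unfolding is_lpoly_iff_finite_lsupp by (rule finite_subset[OF lsupp_lmonom]) simp

lemma is_lpoly_0 [simp]: "is_lpoly 0"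
  by (simp add: is_lpoly_def)

lemma is_lpoly_add [simp]: "is_lpoly f \<Longrightarrow> is_lpoly g \<Longrightarrow> is_lpoly (f + g)"
  unfolding is_lpoly_iff_finite_lsupp
  by (rule finite_subset[of _ "lsupp f \<union> lsupp g"]) (auto simp: lsupp_def)

lemma is_lpoly_uminus [simp]: "is_lpoly f \<Longrightarrow> is_lpoly (- f)"
  by (simp add: is_lpoly_def)

lemma is_lpoly_diff [simp]: "is_lpoly f \<Longrightarrow> is_lpoly g \<Longrightarrow> is_lpoly (f - g)"
  using is_lpoly_add[of f "- g"] by simp

lemma is_lpoly_sum [simp]:
  "(\<And>x. x \<in> S \<Longrightarrow> is_lpoly (h x)) \<Longrightarrow> is_lpoly (\<Sum>x\<in>S. h x)"
  by (induction S rule: infinite_finite_induct) auto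

lemma is_lpoly_const [simp]: "is_lpoly (fls_const c)"
  using is_lpoly_lmonom[of c 0] by (simp add: lmonom_0_right)

lemma is_lpoly_1 [simp]: "is_lpoly 1"
  using is_lpoly_const[of 1] by simp

lemma is_lpoly_X_intpow [simp]: "is_lpoly (fls_X_intpow n)"
  using is_lpoly_lmonom[of 1 n] by (simp add: lmonom_1_left)

lemma is_lpoly_X [simp]: "is_lpoly fls_X"
  using is_lpoly_X_intpow[of 1] by (simp add: fls_X_conv_shift_1)

lemma is_lpoly_t_inv [simp]: "is_lpoly t_inv"
  using is_lpoly_X_intpow[of "-1"] by (simp add: t_inv_def)

lemma is_lpoly_mult [simp]:
  assumes "is_lpoly f" "is_lpoly g"
  shows "is_lpoly (f * g)"
proof -
  have fin: "finite (lsupp f)" "finite (lsupp g)"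
    using assms by (auto simp: is_lpoly_iff_finite_lsupp)
  have "f * g = (\<Sum>i\<in>lsupp f. lmonom (fls_nth f i) i) * (\<Sum>j\<in>lsupp g. lmonom (fls_nth g j) j)"
    using lpoly_eq_sum_lmonom[OF fin(1) order_refl] lpoly_eq_sum_lmonom[OF fin(2) order_refl]
    by simp
  also have "\<dots> = (\<Sum>i\<in>lsupp f. \<Sum>j\<in>lsupp g. lmonom (fls_nth f i * fls_nth g j) (i + j))"
    by (simp add: sum_product lmonom_mult)
  finally show ?thesis by simp
qed

lemma is_lpoly_power [simp]: "is_lpoly f \<Longrightarrow> is_lpoly (f ^ n)"
  by (induction n) auto

lemma lpoly_additive_sum:
  fixes L :: "int fls \<Rightarrow> 'b::comm_monoid_add"
  assumes add: "\<And>f g. is_lpoly f \<Longrightarrow> is_lpoly g \<Longrightarrow> L (f + g) = L f + L g"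
    and zero: "L 0 = 0"
    and "finite S" "\<And>x. x \<in> S \<Longrightarrow> is_lpoly (h x)"
  shows "L (\<Sum>x\<in>S. h x) = (\<Sum>x\<in>S. L (h x))"
  using assms(3,4) by (induction S rule: finite_induct) (simp_all add: zero add)

lemma lpoly_hom_mult:
  fixes L :: "int fls \<Rightarrow> 'b::comm_ring_1" and \<phi> :: "int \<Rightarrow> 'b"
  assumes add: "\<And>f g. is_lpoly f \<Longrightarrow> is_lpoly g \<Longrightarrow> L (f + g) = L f + L g"
    and zero: "L 0 = 0"
    and monom: "\<And>c n. L (lmonom c n) = of_int c * \<phi> n"
    and \<phi>_add: "\<And>i j. \<phi> (i + j) = \<phi> i * \<phi> j"
    and "is_lpoly f" "is_lpoly g"
  shows "L (f * g) = L f * L g"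
proof -
  note L_sum = lpoly_additive_sum[of L, OF add zero]
  have fin: "finite (lsupp f)" "finite (lsupp g)"
    using assms by (auto simp: is_lpoly_iff_finite_lsupp)
  have L_eq: "L h = (\<Sum>i\<in>lsupp h. of_int (fls_nth h i) * \<phi> i)" if "finite (lsupp h)" for h
    by (subst lpoly_eq_sum_lmonom[OF that order_refl]) (simp add: L_sum that monom)
  have "f * g = (\<Sum>i\<in>lsupp f. lmonom (fls_nth f i) i) * (\<Sum>j\<in>lsupp g. lmonom (fls_nth g j) j)"
    using lpoly_eq_sum_lmonom[OF fin(1) order_refl] lpoly_eq_sum_lmonom[OF fin(2) order_refl]
    by simp
  also have "\<dots> = (\<Sum>i\<in>lsupp f. \<Sum>j\<in>lsupp g. lmonom (fls_nth f i * fls_nth g j) (i + j))"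
    by (simp add: sum_product lmonom_mult)
  finally have "L (f * g) = (\<Sum>i\<in>lsupp f. \<Sum>j\<in>lsupp g.
                   (of_int (fls_nth f i) * \<phi> i) * (of_int (fls_nth g j) * \<phi> j))"
    using fin by (simp add: L_sum monom \<phi>_add mult_ac)
  also have "\<dots> = L f * L g"
    by (simp add: L_eq fin sum_product)
  finally show ?thesis .
qed

definition neg_one_pow :: "int \<Rightarrow> int" where
  "neg_one_pow n = (-1) ^ nat \<bar>n\<bar>"

lemma neg_one_pow_if: "neg_one_pow n = (if even n then 1 else -1)"
  by (simp add: neg_one_pow_def minus_one_power_iff even_nat_iff)

lemma neg_one_pow_add: "neg_one_pow (i + j) = neg_one_pow i * neg_one_pow j"
  by (auto simp: neg_one_pow_if)

lemma neg_one_pow_uminus [simp]: "neg_one_pow (- n) = neg_one_pow n"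
  by (simp add: neg_one_pow_def)

lemma eval_m1_eq_sum:
  assumes "finite S" "lsupp f \<subseteq> S"
  shows "eval_m1 f = (\<Sum>n\<in>S. fls_nth f n * neg_one_pow n)"
proof -
  have "eval_m1 f = (\<Sum>n\<in>lsupp f. fls_nth f n * neg_one_pow n)"
    by (simp add: eval_m1_def lsupp_def neg_one_pow_def)
  also have "\<dots> = (\<Sum>n\<in>S. fls_nth f n * neg_one_pow n)"
    using assms by (intro sum.mono_neutral_left) (auto simp: lsupp_def)
  finally show ?thesis .
qed

lemma eval_m1_add [simp]:
  assumes "is_lpoly f" "is_lpoly g"
  shows "eval_m1 (f + g) = eval_m1 f + eval_m1 g"
proof -
  let ?S = "lsupp f \<union> lsupp g"
  have S: "finite ?S" using assms by (simp add: is_lpoly_iff_finite_lsupp)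
  have "eval_m1 (f + g) = (\<Sum>n\<in>?S. fls_nth (f + g) n * neg_one_pow n)"
    using S by (rule eval_m1_eq_sum) (auto simp: lsupp_def)
  also have "\<dots> = eval_m1 f + eval_m1 g"
    using S by (simp add: eval_m1_eq_sum[of ?S] sum.distrib distrib_right)
  finally show ?thesis .
qed

lemma eval_m1_0 [simp]: "eval_m1 0 = 0"
  by (simp add: eval_m1_def)

lemma eval_m1_lmonom [simp]: "eval_m1 (lmonom c n) = c * neg_one_pow n"
  using lsupp_lmonom by (subst eval_m1_eq_sum[of "{n}"]) auto

lemma eval_m1_mult [simp]:
  "is_lpoly f \<Longrightarrow> is_lpoly g \<Longrightarrow> eval_m1 (f * g) = eval_m1 f * eval_m1 g"
  by (rule lpoly_hom_mult[where \<phi> = neg_one_pow]) (simp_all add: neg_one_pow_add)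

lemma eval_m1_uminus [simp]: "is_lpoly f \<Longrightarrow> eval_m1 (- f) = - eval_m1 f"
  using eval_m1_add[of f "- f"] by simp

lemma eval_m1_diff [simp]:
  "is_lpoly f \<Longrightarrow> is_lpoly g \<Longrightarrow> eval_m1 (f - g) = eval_m1 f - eval_m1 g"
  using eval_m1_add[of f "- g"] by simp

lemma eval_m1_const [simp]: "eval_m1 (fls_const c) = c"
  using eval_m1_lmonom[of c 0] by (simp add: lmonom_0_right neg_one_pow_def)

lemma eval_m1_1 [simp]: "eval_m1 1 = 1"
  using eval_m1_const[of 1] by simp

lemma eval_m1_X [simp]: "eval_m1 fls_X = -1"
  using eval_m1_lmonom[of 1 1] by (simp add: lmonom_1_left fls_X_conv_shift_1 neg_one_pow_def)

lemma eval_m1_t_inv [simp]: "eval_m1 t_inv = -1"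
  using eval_m1_lmonom[of 1 "-1"] by (simp add: lmonom_1_left t_inv_def neg_one_pow_def)

lemma eval_m1_power [simp]: "is_lpoly f \<Longrightarrow> eval_m1 (f ^ n) = eval_m1 f ^ n"
  by (induction n) auto

lemma fls_nth_lbar:
  assumes "is_lpoly f"
  shows "fls_nth (lbar f) n = fls_nth f (- n)"
proof -
  have "{k::nat. fls_nth f (- (- int k)) \<noteq> 0} = int -` lsupp f"
    by (auto simp: lsupp_def)
  then have "finite {k::nat. fls_nth f (- (- int k)) \<noteq> 0}"
    using assms finite_vimageI[of "lsupp f" int] by (simp add: is_lpoly_iff_finite_lsupp inj_def)
  with assms show ?thesis
    by (simp add: lbar_def nth_Abs_fls_finite_nonzero_neg_nth)
qed

lemma lsupp_lbar: "is_lpoly f \<Longrightarrow> lsupp (lbar f) = uminus ` lsupp f"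
  by (force simp: lsupp_def fls_nth_lbar)

lemma is_lpoly_lbar [simp]: "is_lpoly f \<Longrightarrow> is_lpoly (lbar f)"
  by (simp add: is_lpoly_iff_finite_lsupp lsupp_lbar)

lemma lbar_add [simp]: "is_lpoly f \<Longrightarrow> is_lpoly g \<Longrightarrow> lbar (f + g) = lbar f + lbar g"
  by (rule fls_eqI) (simp add: fls_nth_lbar)

lemma lbar_0 [simp]: "lbar 0 = 0"
  by (rule fls_eqI) (simp add: fls_nth_lbar)

lemma lbar_lmonom [simp]: "lbar (lmonom c n) = lmonom c (- n)"
  by (rule fls_eqI) (auto simp: fls_nth_lbar)

lemma lbar_mult [simp]: "is_lpoly f \<Longrightarrow> is_lpoly g \<Longrightarrow> lbar (f * g) = lbar f * lbar g"
  by (rule lpoly_hom_mult[where \<phi> = "\<lambda>n. lmonom 1 (- n)"])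
     (simp_all add: of_int_fls_eq_lmonom lmonom_mult)


lemma lbar_diff [simp]: "is_lpoly f \<Longrightarrow> is_lpoly g \<Longrightarrow> lbar (f - g) = lbar f - lbar g"
  by (rule fls_eqI) (simp add: fls_nth_lbar)

lemma lbar_const [simp]: "lbar (fls_const c) = fls_const c"
  using lbar_lmonom[of c 0] by (simp add: lmonom_0_right)

lemma lbar_1 [simp]: "lbar 1 = 1"
  using lbar_const[of 1] by simp

lemma lbar_X [simp]: "lbar fls_X = t_inv"
  using lbar_lmonom[of 1 1] by (simp add: lmonom_1_left fls_X_conv_shift_1 t_inv_def)

lemma lbar_t_inv [simp]: "lbar t_inv = fls_X"
  using lbar_lmonom[of 1 "-1"] by (simp add: lmonom_1_left fls_X_conv_shift_1 t_inv_def)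

lemma eval_m1_lbar [simp]:
  assumes "is_lpoly f"
  shows "eval_m1 (lbar f) = eval_m1 f"
proof -
  have fin: "finite (lsupp f)" using assms by (simp add: is_lpoly_iff_finite_lsupp)
  have "eval_m1 (lbar f) = (\<Sum>n\<in>uminus ` lsupp f. fls_nth (lbar f) n * neg_one_pow n)"
    using fin assms by (intro eval_m1_eq_sum) (simp_all add: lsupp_lbar)
  also have "\<dots> = (\<Sum>n\<in>lsupp f. fls_nth f n * neg_one_pow n)"
    using assms by (simp add: sum.reindex fls_nth_lbar)
  also have "\<dots> = eval_m1 f"
    using fin by (simp add: eval_m1_eq_sum)
  finally show ?thesis .
qed

lemma X_mult_t_inv: "fls_X * t_inv = 1"
  by (simp add: t_inv_def fls_X_conv_shift_1 fls_times_both_shifted_simp)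

lemma t_inv_mult_X: "t_inv * fls_X = 1"
  using X_mult_t_inv by (simp add: mult.commute)

section \<open>Units of Z[t,t^-1]\<close>

lemma lpoly_subdegree_bounds:
  assumes "is_lpoly f" "fls_nth f n \<noteq> 0"
  shows "fls_subdegree f \<le> n" "n \<le> - fls_subdegree (lbar f)"
proof -
  show "fls_subdegree f \<le> n" using assms(2) by (rule fls_subdegree_leI)
  have "fls_nth (lbar f) (- n) \<noteq> 0" using assms by (simp add: fls_nth_lbar)
  then show "n \<le> - fls_subdegree (lbar f)" using fls_subdegree_leI by fastforce
qed

(* The lowest exponent of f is at most the highest one, and both are additive on products;
   for f g = 1 the two inequalities for f and g sum to equalities, so f is a single term. *)
lemma lpoly_unit_eq_lmonom:
  assumes f: "is_lpoly f" and g: "is_lpoly g" and fg: "f * g = 1"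
  obtains c k where "f = lmonom c k" "c = 1 \<or> c = -1"
proof -
  have "f \<noteq> 0" "g \<noteq> 0" using fg by auto
  have bar_fg: "lbar f * lbar g = 1" using fg f g by (metis lbar_mult lbar_1)
  then have "lbar f \<noteq> 0" "lbar g \<noteq> 0" by auto
  have "fls_subdegree f + fls_subdegree g = 0"
    using fls_subdegree_mult[OF \<open>f \<noteq> 0\<close> \<open>g \<noteq> 0\<close>] fg by simp
  moreover have "fls_subdegree (lbar f) + fls_subdegree (lbar g) = 0"
    using fls_subdegree_mult[OF \<open>lbar f \<noteq> 0\<close> \<open>lbar g \<noteq> 0\<close>] bar_fg by simp
  moreover have "fls_subdegree f \<le> - fls_subdegree (lbar f)"
    using lpoly_subdegree_bounds(2)[OF f nth_fls_subdegree_nonzero[OF \<open>f \<noteq> 0\<close>]] .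
  moreover have "fls_subdegree g \<le> - fls_subdegree (lbar g)"
    using lpoly_subdegree_bounds(2)[OF g nth_fls_subdegree_nonzero[OF \<open>g \<noteq> 0\<close>]] .
  ultimately have top: "- fls_subdegree (lbar f) = fls_subdegree f" by linarith
  define k where "k = fls_subdegree f"
  have "lsupp f \<subseteq> {k}"
    using lpoly_subdegree_bounds[OF f] top by (force simp: lsupp_def k_def)
  then have f_eq: "f = lmonom (fls_nth f k) k"
    using lpoly_eq_sum_lmonom[of "{k}" f] by simp
  have "eval_m1 f * eval_m1 g = 1" using fg f g by (metis eval_m1_mult eval_m1_1)
  then have "fls_nth f k * (neg_one_pow k * eval_m1 g) = 1"
    by (subst (asm) f_eq) (simp add: mult.assoc)
  then have "fls_nth f k = 1 \<or> fls_nth f k = -1"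
    by (rule pos_zmult_eq_1_iff_lemma)
  with f_eq that show ?thesis by blast
qed

section \<open>Evaluating matrices of the formal Burau group\<close>

lemma is_lmat_nth [simp]: "is_lmat A \<Longrightarrow> is_lpoly (A $ i $ j)"
  by (simp add: is_lmat_def)

lemma eval_mat_m1_nth [simp]: "eval_mat_m1 A $ i $ j = eval_m1 (A $ i $ j)"
  by (simp add: eval_mat_m1_def)

lemma mat_bar_nth [simp]: "mat_bar A $ i $ j = lbar (A $ i $ j)"
  by (simp add: mat_bar_def)

lemma is_lmat_mult [simp]: "is_lmat A \<Longrightarrow> is_lmat B \<Longrightarrow> is_lmat (A ** B)"
  by (simp add: is_lmat_def matrix_matrix_mult_def)

lemma eval_mat_m1_mult:
  "is_lmat A \<Longrightarrow> is_lmat B \<Longrightarrow> eval_mat_m1 (A ** B) = eval_mat_m1 A ** eval_mat_m1 B"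
  by (simp add: vec_eq_iff matrix_matrix_mult_def sum_3)

lemma mat_bar_mult: "is_lmat A \<Longrightarrow> is_lmat B \<Longrightarrow> mat_bar (A ** B) = mat_bar A ** mat_bar B"
  by (simp add: vec_eq_iff matrix_matrix_mult_def sum_3)

lemma is_lpoly_det [simp]: "is_lmat A \<Longrightarrow> is_lpoly (det A)"
  by (simp add: det_3)

lemma eval_m1_det: "is_lmat A \<Longrightarrow> eval_m1 (det A) = det (eval_mat_m1 A)"
  by (simp add: det_3)

lemma vector_1_1_1_nth [simp]: "(vector [1, 1, 1] :: 'a::zero_neq_one^3) $ i = 1"
  using exhaust_3[of i] by auto

lemma formal_Burau_is_lmat: "A \<in> formal_Burau \<Longrightarrow> is_lmat A"
  by (simp add: formal_Burau_def GL3_laurent_def)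

lemma formal_Burau_row_sum:
  assumes "A \<in> formal_Burau"
  shows "A$i$1 + A$i$2 + A$i$3 = 1"
proof -
  have "(A *v one_col) $ i = one_col $ i"
    using assms by (simp add: formal_Burau_def)
  then show ?thesis by (simp add: matrix_vector_mult_def sum_3 one_col_def)
qed

lemma eval_formal_Burau_row_sum:
  assumes "A \<in> formal_Burau"
  shows "eval_mat_m1 A *v vector [1, 1, 1] = vector [1, 1, 1]"
proof -
  have "eval_m1 (A$i$1 + A$i$2 + A$i$3) = 1" for i
    using formal_Burau_row_sum[OF assms] by simp
  then show ?thesis
    using formal_Burau_is_lmat[OF assms]
    by (simp add: vec_eq_iff forall_3 matrix_vector_mult_def sum_3)
qed

lemma eval_formal_Burau_fixes_v:
  assumes "A \<in> formal_Burau"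
  shows "vector [-1, 1, -1] v* eval_mat_m1 A = vector [-1, 1, -1]"
proof -
  have "(v_row v* A) $ j = v_row $ j" for j
    using assms by (simp add: formal_Burau_def)
  then have "eval_m1 (fls_X * A$1$j + fls_X^2 * A$2$j + fls_X^3 * A$3$j) = eval_m1 (v_row $ j)" for j
    by (simp add: vector_matrix_mult_def sum_3 v_row_def)
  then show ?thesis
    using formal_Burau_is_lmat[OF assms]
    by (simp add: vec_eq_iff forall_3 vector_matrix_mult_def sum_3 v_row_def)
qed

definition skew3 :: "int^3 \<Rightarrow> int^3 \<Rightarrow> int" where
  "skew3 x y = x$1 * y$2 + x$1 * y$3 - x$2 * y$1 + x$2 * y$3 - x$3 * y$1 - x$3 * y$2"

lemma one_plus_X_nonzero: "(1 + fls_X :: int fls) \<noteq> 0"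
proof
  assume "(1 + fls_X :: int fls) = 0"
  then have "fls_nth (1 + fls_X :: int fls) 0 = 0" by simp
  then show False by simp
qed

lemma t_inv_nonzero: "t_inv \<noteq> 0"
  by (simp add: t_inv_def fls_shift_eq0_iff)

(* With the row sums, the relation becomes s (1 + t) ((1 + t) X + (t - 1) (Y - 1)) = 0, where Y is
   the skew form of bar p and q.  Cancelling s (1 + t) and evaluating at t = -1 kills the X-term
   and leaves Y(-1) = 1. *)
lemma skew3_eval_of_unitarity_entry:
  fixes p q :: "int fls^3"
  assumes lp: "\<And>k. is_lpoly (p$k)" "\<And>k. is_lpoly (q$k)"
    and sum_p: "p$1 + p$2 + p$3 = 1" and sum_q: "q$1 + q$2 + q$3 = 1"
    and rel: "(\<Sum>l\<in>UNIV. (\<Sum>k\<in>UNIV. lbar (p$k) * J3$k$l) * q$l) = - t_inv"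
  shows "skew3 (\<chi> k. eval_m1 (p$k)) (\<chi> k. eval_m1 (q$k)) = 1"
proof -
  define t s where "t = (fls_X :: int fls)" and "s = t_inv"
  define b1 b2 b3 where "b1 = lbar (p$1)" and "b2 = lbar (p$2)" and "b3 = lbar (p$3)"
  define X where "X = b1 * q$1 + b2 * q$2 + b3 * q$3"
  define Y where "Y = b1 * q$2 + b1 * q$3 - b2 * q$1 + b2 * q$3 - b3 * q$1 - b3 * q$2"
  have ts: "t * s = 1" by (simp add: t_def s_def X_mult_t_inv)
  have sum_b: "b1 + b2 + b3 = 1"
    using arg_cong[OF sum_p, of lbar] lp by (simp add: b1_def b2_def b3_def)
  have rel': "b1 * q$1 - t * b2 * q$1 - t * b3 * q$1 - s * b1 * q$2 + b2 * q$2 - t * b3 * q$2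
              - s * b1 * q$3 - s * b2 * q$3 + b3 * q$3 = - s"
    using rel by (simp add: sum_3 J3_def t_def s_def b1_def b2_def b3_def algebra_simps)
  have "s * (1 + t) * ((1 + t) * X + (t - 1) * (Y - 1)) = 0"
    using rel' sum_b sum_q ts unfolding X_def Y_def by algebra
  then have "(1 + t) * X + (t - 1) * (Y - 1) = 0"
    using one_plus_X_nonzero t_inv_nonzero by (simp add: t_def s_def)
  then have "eval_m1 ((1 + t) * X + (t - 1) * (Y - 1)) = 0"
    by simp
  then have "eval_m1 Y = 1"
    using lp by (simp add: t_def X_def Y_def b1_def b2_def b3_def)
  then show ?thesis
    using lp by (simp add: Y_def b1_def b2_def b3_def skew3_def)
qed

lemma eval_formal_Burau_skew3:
  assumes A: "A \<in> formal_Burau" and ij: "J3$i$j = - t_inv"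
  shows "skew3 (eval_mat_m1 A $ i) (eval_mat_m1 A $ j) = 1"
proof -
  have "(mat_bar A ** J3 ** transpose A) $ i $ j = J3 $ i $ j"
    using A by (simp add: formal_Burau_def)
  then have "(\<Sum>l\<in>UNIV. (\<Sum>k\<in>UNIV. lbar (A$i$k) * J3$k$l) * A$j$l) = - t_inv"
    using ij by (simp add: matrix_matrix_mult_def transpose_def)
  then have "skew3 (\<chi> k. eval_m1 (A$i$k)) (\<chi> k. eval_m1 (A$j$k)) = 1"
    using formal_Burau_is_lmat[OF A] formal_Burau_row_sum[OF A]
    by (intro skew3_eval_of_unitarity_entry) simp_all
  moreover have "eval_mat_m1 A $ r = (\<chi> k. eval_m1 (A$r$k))" for r
    by (simp add: vec_eq_iff)
  ultimately show ?thesis by simp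
qed

lemma det_eq_1_if_skew3_rows:
  fixes B :: "int^3^3"
  assumes "vector [-1, 1, -1] v* B = vector [-1, 1, -1]"
    and "skew3 (B$1) (B$2) = 1" "skew3 (B$1) (B$3) = 1" "skew3 (B$2) (B$3) = 1"
  shows "det B = 1"
proof -
  have "- B$1$j + B$2$j - B$3$j = vector [-1, 1, -1] $ j" for j
    using arg_cong[OF assms(1), of "\<lambda>x. x $ j"] by (simp add: vector_matrix_mult_def sum_3)
  from this[of 1] this[of 2] this[of 3] assms(2-4) show ?thesis
    unfolding det_3 skew3_def by simp algebra
qed

lemma det_rho_eq_1:
  fixes B :: "int^3^3"
  assumes "B *v vector [1, 1, 1] = vector [1, 1, 1]"
    and "vector [-1, 1, -1] v* B = vector [-1, 1, -1]"
    and "det B = 1"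
  shows "det (rho B) = 1"
proof -
  have row: "B$i$1 + B$i$2 + B$i$3 = 1" for i
    using arg_cong[OF assms(1), of "\<lambda>x. x $ i"] by (simp add: matrix_vector_mult_def sum_3)
  have col: "- B$1$j + B$2$j - B$3$j = vector [-1, 1, -1] $ j" for j
    using arg_cong[OF assms(2), of "\<lambda>x. x $ j"] by (simp add: vector_matrix_mult_def sum_3)
  from row[of 1] row[of 2] row[of 3] col[of 1] col[of 2] col[of 3] assms(3) show ?thesis
    unfolding det_3 by (simp add: det_2 rho_def) algebra
qed

lemma det_eval_formal_Burau:
  assumes "A \<in> formal_Burau"
  shows "det (eval_mat_m1 A) = 1"
  by (rule det_eq_1_if_skew3_rows)
     (simp_all add: assms eval_formal_Burau_fixes_v eval_formal_Burau_skew3 J3_def)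

lemma det_formal_Burau:
  assumes A: "A \<in> formal_Burau"
  obtains k where "det A = neg_t_pow k"
proof -
  have lA: "is_lmat A" using A by (rule formal_Burau_is_lmat)
  obtain A' where "is_lmat A'" "A ** A' = mat 1"
    using A by (auto simp: formal_Burau_def GL3_laurent_def)
  then have "det A * det A' = 1"
    by (metis det_I det_mul)
  then obtain c k where det_A: "det A = lmonom c k" and c: "c = 1 \<or> c = -1"
    using lpoly_unit_eq_lmonom[of "det A" "det A'"] lA \<open>is_lmat A'\<close> by auto
  have "c * neg_one_pow k = 1"
    using eval_m1_det[OF lA] det_eval_formal_Burau[OF A] det_A by simp
  with c have sign: "c = neg_one_pow k"
    by (auto simp: neg_one_pow_if split: if_splits)
  have "neg_t_pow k = of_int (neg_one_pow k) * lmonom 1 k"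
    by (simp add: neg_t_pow_def neg_one_pow_def lmonom_1_left)
  also have "\<dots> = det A"
    by (simp add: of_int_fls_eq_lmonom lmonom_mult det_A sign)
  finally show ?thesis by (intro that[of k]) simp
qed

lemma rho_formal_Burau_in_SL2:
  assumes "A \<in> formal_Burau"
  shows "det (rho (eval_mat_m1 A)) = 1"
  using assms
  by (intro det_rho_eq_1 eval_formal_Burau_row_sum eval_formal_Burau_fixes_v det_eval_formal_Burau)

lemma mat_1_formal_Burau: "mat 1 \<in> formal_Burau"
proof -
  have "is_lmat (mat 1)" by (simp add: is_lmat_def mat_def)
  moreover have "v_row v* mat 1 = v_row" "mat 1 *v one_col = one_col"
    by simp_all
  moreover have "mat_bar (mat 1) ** J3 ** transpose (mat 1) = J3"
    by (simp add: vec_eq_iff forall_3 matrix_matrix_mult_def transpose_def mat_def sum_3 J3_def)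
  ultimately show ?thesis
    by (auto simp: formal_Burau_def GL3_laurent_def intro!: exI[of _ "mat 1"])
qed

lemma formal_Burau_mult:
  assumes A: "A \<in> formal_Burau" and B: "B \<in> formal_Burau"
  shows "A ** B \<in> formal_Burau"
proof -
  obtain A' where A': "is_lmat A'" "A ** A' = mat 1" "A' ** A = mat 1"
    using A by (auto simp: formal_Burau_def GL3_laurent_def)
  obtain B' where B': "is_lmat B'" "B ** B' = mat 1" "B' ** B = mat 1"
    using B by (auto simp: formal_Burau_def GL3_laurent_def)
  have lA: "is_lmat A" and lB: "is_lmat B"
    using A B by (simp_all add: formal_Burau_is_lmat)
  have "(A ** B) ** (B' ** A') = A ** (B ** B') ** A'"
       "(B' ** A') ** (A ** B) = B' ** (A' ** A) ** B"
    by (simp_all add: matrix_mul_assoc)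
  then have inv: "(A ** B) ** (B' ** A') = mat 1" "(B' ** A') ** (A ** B) = mat 1"
    using A' B' by (simp_all add: matrix_mul_rid)
  have "mat_bar (A ** B) ** J3 ** transpose (A ** B)
        = mat_bar A ** (mat_bar B ** J3 ** transpose B) ** transpose A"
    using lA lB by (simp add: mat_bar_mult matrix_transpose_mul matrix_mul_assoc)
  also have "\<dots> = J3" using A B by (simp add: formal_Burau_def)
  finally show ?thesis
    using A B inv lA lB A' B'
    by (auto simp: formal_Burau_def GL3_laurent_def vector_matrix_mul_assoc[symmetric]
        matrix_vector_mul_assoc[symmetric] intro!: exI[of _ "B' ** A'"])
qed

(* The unreduced Burau matrices of the braid generators sigma_1, sigma_2 of B_3 and of their
   inverses. *)
definition sigma1 :: "int fls^3^3" where
  "sigma1 = vector [vector [1 - fls_X, fls_X, 0], vector [1, 0, 0], vector [0, 0, 1]]"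

definition sigma2 :: "int fls^3^3" where
  "sigma2 = vector [vector [1, 0, 0], vector [0, 1 - fls_X, fls_X], vector [0, 1, 0]]"

definition sigma1_inv :: "int fls^3^3" where
  "sigma1_inv = vector [vector [0, 1, 0], vector [t_inv, 1 - t_inv, 0], vector [0, 0, 1]]"

definition sigma2_inv :: "int fls^3^3" where
  "sigma2_inv = vector [vector [1, 0, 0], vector [0, 0, 1], vector [0, t_inv, 1 - t_inv]]"

lemmas sigma_defs = sigma1_def sigma2_def sigma1_inv_def sigma2_inv_def

lemma X_t_inv_cancel: "fls_X * (t_inv * f) = f" "t_inv * (fls_X * f) = f"
  by (simp_all add: mult.assoc[symmetric] X_mult_t_inv t_inv_mult_X)

lemma sigma_formal_Burau:
  "sigma1 \<in> formal_Burau" "sigma2 \<in> formal_Burau"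
  "sigma1_inv \<in> formal_Burau" "sigma2_inv \<in> formal_Burau"
proof -
  note mat_simps = vec_eq_iff forall_3 matrix_matrix_mult_def matrix_vector_mult_def
    vector_matrix_mult_def transpose_def mat_def sum_3 sigma_defs
  note X_t_inv = X_mult_t_inv t_inv_mult_X X_t_inv_cancel
  have "is_lmat sigma1" "is_lmat sigma2" "is_lmat sigma1_inv" "is_lmat sigma2_inv"
    by (simp_all add: is_lmat_def forall_3 sigma_defs)
  moreover have "sigma1 ** sigma1_inv = mat 1" "sigma1_inv ** sigma1 = mat 1"
    "sigma2 ** sigma2_inv = mat 1" "sigma2_inv ** sigma2 = mat 1"
    by (simp_all add: mat_simps algebra_simps X_t_inv)
  moreover have "v_row v* sigma1 = v_row" "v_row v* sigma2 = v_row"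
    "v_row v* sigma1_inv = v_row" "v_row v* sigma2_inv = v_row"
    unfolding mat_simps v_row_def
    by (simp_all add: algebra_simps X_t_inv power2_eq_square power3_eq_cube)
  moreover have "sigma1 *v one_col = one_col" "sigma2 *v one_col = one_col"
    "sigma1_inv *v one_col = one_col" "sigma2_inv *v one_col = one_col"
    by (simp_all add: mat_simps one_col_def)
  moreover have "mat_bar sigma1 ** J3 ** transpose sigma1 = J3"
    "mat_bar sigma2 ** J3 ** transpose sigma2 = J3"
    "mat_bar sigma1_inv ** J3 ** transpose sigma1_inv = J3"
    "mat_bar sigma2_inv ** J3 ** transpose sigma2_inv = J3"
    unfolding mat_simps J3_def mat_bar_def
    by (simp_all add: algebra_simps X_t_inv)
  ultimately show "sigma1 \<in> formal_Burau" "sigma2 \<in> formal_Burau"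
    "sigma1_inv \<in> formal_Burau" "sigma2_inv \<in> formal_Burau"
    by (auto simp: formal_Burau_def GL3_laurent_def)
qed

section \<open>The action on SL(2,Z)\<close>

definition mat2 :: "int \<Rightarrow> int \<Rightarrow> int \<Rightarrow> int \<Rightarrow> int^2^2" where
  "mat2 a b c d = vector [vector [a, b], vector [c, d]]"

lemma mat2_eq_iff: "mat2 a b c d = mat2 a' b' c' d' \<longleftrightarrow> a = a' \<and> b = b' \<and> c = c' \<and> d = d'"
  by (auto simp: mat2_def vec_eq_iff forall_2)

lemma mat2_mult:
  "mat2 a b c d ** mat2 a' b' c' d' = mat2 (a * a' + b * c') (a * b' + b * d') (c * a' + d * c') (c * b' + d * d')"
  by (simp add: mat2_def vec_eq_iff forall_2 matrix_matrix_mult_def sum_2)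

lemma uminus_mat2: "- mat2 a b c d = mat2 (- a) (- b) (- c) (- d)"
  by (simp add: mat2_def vec_eq_iff forall_2)

lemma rho_eq_mat2: "rho B = mat2 (1 - B$1$3) (1 - B$1$1) (1 - B$3$3) (1 - B$3$1)"
  by (simp add: rho_def mat2_def)

lemma det_mat2: "det (mat2 a b c d) = a * d - b * c"
  by (simp add: det_2 mat2_def)

lemma mat2_cases: obtains a b c d where "M = mat2 a b c d"
  by (rule that[of "M$1$1" "M$1$2" "M$2$1" "M$2$2"]) (simp add: mat2_def vec_eq_iff forall_2)

lemma rho_eval_mult_sigma:
  assumes A: "A \<in> formal_Burau"
  shows "rho (eval_mat_m1 (A ** sigma1)) = rho (eval_mat_m1 A) ** mat2 1 (-1) 0 1"
    and "rho (eval_mat_m1 (A ** sigma1_inv)) = rho (eval_mat_m1 A) ** mat2 1 1 0 1"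
    and "rho (eval_mat_m1 (A ** sigma2)) = rho (eval_mat_m1 A) ** mat2 1 0 1 1"
    and "rho (eval_mat_m1 (A ** sigma2_inv)) = rho (eval_mat_m1 A) ** mat2 1 0 (-1) 1"
proof -
  define B where "B = eval_mat_m1 A"
  have "B$i$1 + B$i$2 + B$i$3 = 1" for i
    using arg_cong[OF eval_formal_Burau_row_sum[OF A], of "\<lambda>x. x $ i"]
    by (simp add: B_def matrix_vector_mult_def sum_3)
  from this[of 1] this[of 3] have rows: "B$1$2 = 1 - B$1$1 - B$1$3" "B$3$2 = 1 - B$3$1 - B$3$3"
    by linarith+
  have mult_nth: "(B ** C) $ i $ j = (\<Sum>k\<in>UNIV. B$i$k * C$k$j)" for C :: "int^3^3" and i j
    by (simp add: matrix_matrix_mult_def)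
  have "eval_mat_m1 (A ** g) = B ** eval_mat_m1 g" if "g \<in> formal_Burau" for g
    using A that by (simp add: B_def eval_mat_m1_mult formal_Burau_is_lmat)
  note eval_mult = this[OF sigma_formal_Burau(1)] this[OF sigma_formal_Burau(2)]
    this[OF sigma_formal_Burau(3)] this[OF sigma_formal_Burau(4)]
  show "rho (eval_mat_m1 (A ** sigma1)) = rho (eval_mat_m1 A) ** mat2 1 (-1) 0 1"
    and "rho (eval_mat_m1 (A ** sigma1_inv)) = rho (eval_mat_m1 A) ** mat2 1 1 0 1"
    and "rho (eval_mat_m1 (A ** sigma2)) = rho (eval_mat_m1 A) ** mat2 1 0 1 1"
    and "rho (eval_mat_m1 (A ** sigma2_inv)) = rho (eval_mat_m1 A) ** mat2 1 0 (-1) 1"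
    unfolding eval_mult B_def[symmetric]
    by (simp_all add: rows mult_nth rho_eq_mat2 mat2_mult mat2_eq_iff sum_3 sigma_defs)
qed

lemma matrix_mul_uminus_left: "(- A) ** B = - (A ** (B :: 'a::ring_1^'n^'m))"
  by (simp add: vec_eq_iff matrix_matrix_mult_def sum_negf)

definition rho_attains_pm :: "int^2^2 \<Rightarrow> bool" where
  "rho_attains_pm M \<longleftrightarrow> (\<exists>A\<in>formal_Burau. rho (eval_mat_m1 A) \<in> {M, - M})"

lemma rho_attains_pm_mult:
  assumes "rho_attains_pm M" and g: "g \<in> formal_Burau"
    and g_acts: "\<And>A. A \<in> formal_Burau \<Longrightarrow> rho (eval_mat_m1 (A ** g)) = rho (eval_mat_m1 A) ** E"
  shows "rho_attains_pm (M ** E)"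
proof -
  obtain A where A: "A \<in> formal_Burau" "rho (eval_mat_m1 A) \<in> {M, - M}"
    using assms(1) by (auto simp: rho_attains_pm_def)
  then have "rho (eval_mat_m1 (A ** g)) \<in> {M ** E, - (M ** E)}"
    using g_acts[OF A(1)] by (auto simp: matrix_mul_uminus_left)
  with formal_Burau_mult[OF A(1) g] show ?thesis
    by (auto simp: rho_attains_pm_def)
qed

lemma SL2_int_induct [consumes 1, case_names one neg col2_sub_col1 col2_add_col1 col1_add_col2 col1_sub_col2]:
  fixes P :: "int \<Rightarrow> int \<Rightarrow> int \<Rightarrow> int \<Rightarrow> bool"
  assumes det: "a * d - b * c = 1"
    and one: "P 1 0 0 1"
    and neg: "\<And>a b c d. P a b c d \<Longrightarrow> P (- a) (- b) (- c) (- d)"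
    and col2_sub_col1: "\<And>a b c d. P a b c d \<Longrightarrow> P a (b - a) c (d - c)"
    and col2_add_col1: "\<And>a b c d. P a b c d \<Longrightarrow> P a (b + a) c (d + c)"
    and col1_add_col2: "\<And>a b c d. P a b c d \<Longrightarrow> P (a + b) b (c + d) d"
    and col1_sub_col2: "\<And>a b c d. P a b c d \<Longrightarrow> P (a - b) b (c - d) d"
  shows "P a b c d"
proof -
  have lower: "P 1 0 n 1" for n
  proof (induction n rule: int_induct[where k = 0])
    case base
    then show ?case by (rule one)
  next
    case (step1 i)
    then show ?case using col1_add_col2[of 1 0 i 1] by simp
  next
    case (step2 i)
    then show ?case using col1_sub_col2[of 1 0 i 1] by simp
  qed
  have b_zero: "P a 0 c d" if "a * d = 1" for a c d
  proof -
    from that have "a = 1 \<and> d = 1 \<or> a = -1 \<and> d = -1"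
      by (simp add: zmult_eq_1_iff)
    then show ?thesis using lower[of c] neg[OF lower[of "- c"]] by auto
  qed
  have a_zero: "P 0 b c d" if "b * c = -1" for b c d
  proof -
    have "P (- b) 0 (c - d) c" by (rule b_zero) (use that in simp)
    then have "P (- b) b (c - d) d" using col2_sub_col1[of "- b" 0 "c - d" c] by simp
    then show ?thesis using col1_add_col2[of "- b" b "c - d" d] by simp
  qed
  show ?thesis
    using det
  proof (induction "nat (\<bar>a\<bar> + \<bar>b\<bar>)" arbitrary: a b c d rule: less_induct)
    case less
    show ?case
    proof (cases "a = 0 \<or> b = 0")
      case True
      with less.prems show ?thesis using a_zero b_zero by auto
    next
      case False
      (* Euclid's algorithm: one column operation shrinks the larger of |a| and |b|. *)
      consider "\<bar>b\<bar> \<le> \<bar>a\<bar>" "0 < a * b" | "\<bar>b\<bar> \<le> \<bar>a\<bar>" "a * b < 0"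
        | "\<bar>a\<bar> < \<bar>b\<bar>" "0 < a * b" | "\<bar>a\<bar> < \<bar>b\<bar>" "a * b < 0"
        using False by (metis linorder_neqE_linordered_idom mult_eq_0_iff not_le)
      then show ?thesis
      proof cases
        case 1
        have "P (a - b) b (c - d) d"
          by (rule less.hyps) (use 1 False less.prems in \<open>auto simp: zero_less_mult_iff algebra_simps\<close>)
        then show ?thesis using col1_add_col2[of "a - b" b "c - d" d] by simp
      next
        case 2
        have "P (a + b) b (c + d) d"
          by (rule less.hyps) (use 2 False less.prems in \<open>auto simp: mult_less_0_iff algebra_simps\<close>)
        then show ?thesis using col1_sub_col2[of "a + b" b "c + d" d] by simp
      next
        case 3
        have "P a (b - a) c (d - c)"
          by (rule less.hyps) (use 3 False less.prems in \<open>auto simp: zero_less_mult_iff algebra_simps\<close>)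
        then show ?thesis using col2_add_col1[of a "b - a" c "d - c"] by simp
      next
        case 4
        have "P a (b + a) c (d + c)"
          by (rule less.hyps) (use 4 False less.prems in \<open>auto simp: mult_less_0_iff algebra_simps\<close>)
        then show ?thesis using col2_sub_col1[of a "b + a" c "d + c"] by simp
      qed
    qed
  qed
qed

lemma rho_attains_pm_SL2:
  assumes "det M = 1"
  shows "rho_attains_pm M"
proof -
  obtain a b c d where M: "M = mat2 a b c d" by (rule mat2_cases)
  have "rho_attains_pm (mat2 a b c d)"
    using assms unfolding M det_mat2
  proof (induction rule: SL2_int_induct)
    case one
    have "rho (eval_mat_m1 (mat 1)) = mat2 1 0 0 1"
      by (simp add: rho_eq_mat2 mat_def)
    then show ?case
      using mat_1_formal_Burau by (auto simp: rho_attains_pm_def)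
  next
    case (neg a b c d)
    then show ?case by (auto simp: rho_attains_pm_def uminus_mat2)
  next
    case (col2_sub_col1 a b c d)
    have "rho_attains_pm (mat2 a b c d ** mat2 1 (-1) 0 1)"
      using col2_sub_col1 sigma_formal_Burau(1) rho_eval_mult_sigma(1) by (rule rho_attains_pm_mult)
    then show ?case by (simp add: mat2_mult add.commute)
  next
    case (col2_add_col1 a b c d)
    have "rho_attains_pm (mat2 a b c d ** mat2 1 1 0 1)"
      using col2_add_col1 sigma_formal_Burau(3) rho_eval_mult_sigma(2) by (rule rho_attains_pm_mult)
    then show ?case by (simp add: mat2_mult add.commute)
  next
    case (col1_add_col2 a b c d)
    have "rho_attains_pm (mat2 a b c d ** mat2 1 0 1 1)"
      using col1_add_col2 sigma_formal_Burau(2) rho_eval_mult_sigma(3) by (rule rho_attains_pm_mult)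
    then show ?case by (simp add: mat2_mult add.commute)
  next
    case (col1_sub_col2 a b c d)
    have "rho_attains_pm (mat2 a b c d ** mat2 1 0 (-1) 1)"
      using col1_sub_col2 sigma_formal_Burau(4) rho_eval_mult_sigma(4) by (rule rho_attains_pm_mult)
    then show ?case by (simp add: mat2_mult add.commute)
  qed
  then show ?thesis by (simp add: M)
qed

lemma pgl_class_uminus: "pgl_class (- X) = pgl_class X"
proof -
  have "(\<chi> i j. c * (- X) $ i $ j) = (\<chi> i j. (- c) * X $ i $ j)" for c
    by (simp add: vec_eq_iff)
  then have "pgl_class (- X) = (\<lambda>c. \<chi> i j. c * X $ i $ j) ` uminus ` {c. c \<noteq> 0}"
    by (auto simp: pgl_class_def image_image)
  also have "uminus ` {c :: Qt. c \<noteq> 0} = {c. c \<noteq> 0}"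
    by (force intro: image_eqI[of _ _ "- c" for c])
  finally show ?thesis
    by (auto simp: pgl_class_def)
qed

lemma int_to_Qt_mat_uminus: "int_to_Qt_mat (- M) = - int_to_Qt_mat M"
  by (simp add: int_to_Qt_mat_def vec_eq_iff)

lemma rho_bar_formal_Burau_in_PSL2Z:
  assumes "A \<in> formal_Burau"
  shows "rho_bar A \<in> PSL2Z"
  using rho_formal_Burau_in_SL2[OF assms] by (auto simp: rho_bar_def PSL2Z_def)

lemma PSL2Z_subset_rho_bar_image: "PSL2Z \<subseteq> rho_bar ` formal_Burau"
proof
  fix X assume "X \<in> PSL2Z"
  then obtain M where M: "det M = 1" "X = pgl_class (int_to_Qt_mat M)"
    by (auto simp: PSL2Z_def)
  obtain A where A: "A \<in> formal_Burau" "rho (eval_mat_m1 A) \<in> {M, - M}"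
    using rho_attains_pm_SL2[OF M(1)] by (auto simp: rho_attains_pm_def)
  then have "rho_bar A = X"
    using M(2) by (auto simp: rho_bar_def int_to_Qt_mat_uminus pgl_class_uminus)
  with A(1) show "X \<in> rho_bar ` formal_Burau" by blast
qed

theorem lemma3p10:
  shows "(\<forall>A \<in> formal_Burau. \<exists>k::int. det A = neg_t_pow k)
         \<and> rho_bar ` formal_Burau = PSL2Z"
proof
  show "\<forall>A \<in> formal_Burau. \<exists>k. det A = neg_t_pow k"
    using det_formal_Burau by metis
  show "rho_bar ` formal_Burau = PSL2Z"
    using rho_bar_formal_Burau_in_PSL2Z PSL2Z_subset_rho_bar_image by (intro subset_antisym) auto
qed

end
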